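(* Let $T_{abc}$ be the torsion tensor of a 4-dimensional teleparallel geometry, decomposed as $T_{abc}=\tfrac23(t_{abc}-t_{acb})-\tfrac13(g_{ab}V_c-g_{ac}V_b)+\epsilon_{abcd}A^d$ into its vector part $V_a=T^b{}_{ba}$, axial part $A^a=\tfrac16\epsilon^{abcd}T_{bcd}$ and purely tensor part $t_{(ab)c}=\tfrac12(T_{abc}+T_{bac})-\tfrac16(g_{ca}V_b+g_{cb}V_a)+\tfrac13 g_{ab}V_c$. Then $T_{abc}$ is of alignment type II or more special if and only if, relative to a common null coframe, (i) the purely tensor part $t_{(ab)c}$ is of alignment type II, III, N or O, and (ii) the vector part $V$ and the axial part $A$ are each of alignment type II, III or O.
   Context: A teleparallel geometry is a 4-dimensional manifold with a coframe $\{\mathbf h^a\}$, metric $g=\eta_{ab}\mathbf h^a\otimes\mathbf h^b$ of Lorentzian signature, and a flat metric-compatible spin connection $\omega^a{}_b$; the torsion is $T^a{}_{\mu\nu}=\partial_\mu h^a{}_\nu-\partial_\nu h^a{}_\mu+\omega^a{}_{b\mu}h^b{}_\nu-\omega^a{}_{b\nu}h^b{}_\mu$, with frame indices lowered by $\eta_{ab}$; $\epsilon_{abcd}$ is the volume form. A complex null coframe is $\{\mathbf h^1,\mathbf h^2,\mathbf h^3,\mathbf h^4\}=\{\mathbf n,\boldsymbol\ell,\bar{\mathbf m},\mathbf m\}$ with $\eta_{12}=\eta_{21}=-1$, $\eta_{34}=\eta_{43}=1$, other $\eta_{ab}=0$. The boost weight of a covariant frame component $T_{a_1\dots a_r}$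 is the number of indices equal to $1$ minus the number equal to $2$. Relative to a given null coframe, a nonzero tensor is of alignment type II or more special if all its components of positive boost weight vanish, of type III or more special if all components of boost weight $\ge0$ vanish, of type N if all components of boost weight $\ge -1$ vanish, and of type O if it vanishes; a tensor is of a given type if such a null coframe exists. *)

theory Defs
  imports Complex_Main
begin

text \<open>Algebraic (pointwise) setting: frame components of tensors with respect to a
complex null coframe (n, l, mbar, m) are functions of frame indices in {1..4}.\<close>

definition idx :: "nat set" where "idx = {1..4}"

text \<open>Frame metric eta_ab of the complex null coframe; it is its own inverse.\<close>
definition eta :: "nat \<Rightarrow> nat \<Rightarrow> complex" where
  "eta a b = (if (a = 1 \<and> b = 2) \<or> (a = 2 \<and> b = 1) then -1
              else if (a = 3 \<and> b = 4) \<or> (a = 4 \<and> b = 3) then 1 else 0)"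

definition eta_inv :: "nat \<Rightarrow> nat \<Rightarrow> complex" where
  "eta_inv a b = (if (a = 1 \<and> b = 2) \<or> (a = 2 \<and> b = 1) then -1
              else if (a = 3 \<and> b = 4) \<or> (a = 4 \<and> b = 3) then 1 else 0)"

definition levi :: "nat \<Rightarrow> nat \<Rightarrow> nat \<Rightarrow> nat \<Rightarrow> complex" where
  "levi a b c d = (if {a,b,c,d} \<subseteq> idx then
     of_int (sgn ((int b - int a) * (int c - int a) * (int d - int a) *
                  (int c - int b) * (int d - int b) * (int d - int c))) else 0)"

text \<open>Volume form epsilon_abcd in the complex null frame: epsilon_1234 = e, where
  e is i or -i (orientation); e^2 = -1 as required by Lorentzian signature.\<close>
definition eps_dn :: "complex \<Rightarrow> nat \<Rightarrow> nat \<Rightarrow> nat \<Rightarrow> nat \<Rightarrow> complex" where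
  "eps_dn e a b c d = e * levi a b c d"

definition eps_up :: "complex \<Rightarrow> nat \<Rightarrow> nat \<Rightarrow> nat \<Rightarrow> nat \<Rightarrow> complex" where
  "eps_up e a b c d = (\<Sum>p\<in>idx. \<Sum>q\<in>idx. \<Sum>r\<in>idx. \<Sum>s\<in>idx.
      eta_inv a p * eta_inv b q * eta_inv c r * eta_inv d s * eps_dn e p q r s)"

definition vecpart :: "(nat \<Rightarrow> nat \<Rightarrow> nat \<Rightarrow> complex) \<Rightarrow> nat \<Rightarrow> complex" where
  "vecpart T a = (\<Sum>b\<in>idx. \<Sum>c\<in>idx. eta_inv b c * T c b a)"

definition axial_up :: "complex \<Rightarrow> (nat \<Rightarrow> nat \<Rightarrow> nat \<Rightarrow> complex) \<Rightarrow> nat \<Rightarrow> complex" where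
  "axial_up e T a = (1/6) * (\<Sum>b\<in>idx. \<Sum>c\<in>idx. \<Sum>d\<in>idx. eps_up e a b c d * T b c d)"

definition axial :: "complex \<Rightarrow> (nat \<Rightarrow> nat \<Rightarrow> nat \<Rightarrow> complex) \<Rightarrow> nat \<Rightarrow> complex" where
  "axial e T a = (\<Sum>b\<in>idx. eta a b * axial_up e T b)"

definition tenspart :: "(nat \<Rightarrow> nat \<Rightarrow> nat \<Rightarrow> complex) \<Rightarrow> nat \<Rightarrow> nat \<Rightarrow> nat \<Rightarrow> complex" where
  "tenspart T a b c = (1/2) * (T a b c + T b a c)
     - (1/6) * (eta c a * vecpart T b + eta c b * vecpart T a)
     + (1/3) * eta a b * vecpart T c"

definition bw :: "nat \<Rightarrow> int" where
  "bw a = (if a = 1 then 1 else if a = 2 then -1 else 0)"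

definition typeII_or_special_1 :: "(nat \<Rightarrow> complex) \<Rightarrow> bool" where
  "typeII_or_special_1 X \<longleftrightarrow> (\<forall>a\<in>idx. bw a > 0 \<longrightarrow> X a = 0)"

definition typeII_or_special_3 :: "(nat \<Rightarrow> nat \<Rightarrow> nat \<Rightarrow> complex) \<Rightarrow> bool" where
  "typeII_or_special_3 X \<longleftrightarrow>
     (\<forall>a\<in>idx. \<forall>b\<in>idx. \<forall>c\<in>idx. bw a + bw b + bw c > 0 \<longrightarrow> X a b c = 0)"

text \<open>Complex conjugation of frame indices: n, l real, conj m = mbar.\<close>
definition cswap :: "nat \<Rightarrow> nat" where
  "cswap a = (if a = 3 then 4 else if a = 4 then 3 else a)"

text \<open>Torsion tensor components: antisymmetric in the last two indices and real
(frame components in the complex null frame satisfy the induced reality condition).\<close>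
definition torsion_like :: "(nat \<Rightarrow> nat \<Rightarrow> nat \<Rightarrow> complex) \<Rightarrow> bool" where
  "torsion_like T \<longleftrightarrow>
     (\<forall>a\<in>idx. \<forall>b\<in>idx. \<forall>c\<in>idx. T a b c = - T a c b \<and>
        cnj (T a b c) = T (cswap a) (cswap b) (cswap c))"

end

theory Submission imports Defs begin

text \<open>Boost weight is additive and invariant under permuting indices, and \<open>eta\<close> only pairs
indices of opposite weight. So once \<open>V\<^sub>1 = 0\<close>, the components of positive boost weight of
the tensor part \<open>t\<close> are those of the symmetrisation \<open>T\<^sub>a\<^sub>b\<^sub>c + T\<^sub>b\<^sub>a\<^sub>c\<close>.
By antisymmetry, the positive-weight components of \<open>T\<close> are spanned by \<open>T\<^sub>1\<^sub>1\<^sub>2\<close>,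
\<open>T\<^sub>1\<^sub>1\<^sub>3\<close>, \<open>T\<^sub>1\<^sub>1\<^sub>4\<close>, \<open>T\<^sub>3\<^sub>1\<^sub>3\<close>, \<open>T\<^sub>4\<^sub>1\<^sub>4\<close> and
\<open>x = T\<^sub>1\<^sub>3\<^sub>4\<close>, \<open>y = T\<^sub>3\<^sub>1\<^sub>4\<close>, \<open>z = T\<^sub>4\<^sub>1\<^sub>3\<close>, with
\<open>V\<^sub>1 = T\<^sub>1\<^sub>1\<^sub>2 - y - z\<close> and \<open>3 A\<^sub>1 = e (x - y + z)\<close>. Type II of the
symmetrisation kills the first five and forces \<open>y = -x\<close>, \<open>z = x\<close>; then \<open>A\<^sub>1 = e x\<close>,
so \<open>A\<^sub>1 = 0\<close> forces \<open>x = 0\<close>.\<close>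

lemma idx_eq: "idx = {1, 2, 3, 4}"
  by (auto simp: idx_def)

lemma sum_idx: "sum f idx = f 1 + f 2 + f 3 + f 4"
  by (simp add: idx_eq add.assoc)

lemma ball_idx: "(\<forall>a\<in>idx. P a) \<longleftrightarrow> P 1 \<and> P 2 \<and> P 3 \<and> P 4"
  by (simp add: idx_eq)

lemma bw_pos_iff: "0 < bw a \<longleftrightarrow> a = 1"
  by (simp add: bw_def)

lemma eta_nonzero_imp_bw_cancel: "eta a b \<noteq> 0 \<Longrightarrow> bw a + bw b = 0"
  unfolding eta_def bw_def by (simp split: if_splits; linarith)

lemma typeII_or_special_1_iff: "typeII_or_special_1 X \<longleftrightarrow> X 1 = 0"
  by (simp add: typeII_or_special_1_def idx_eq bw_def)

lemma typeII_or_special_3_sym_12: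
  "typeII_or_special_3 T \<Longrightarrow> typeII_or_special_3 (\<lambda>a b c. T a b c + T b a c)"
  unfolding typeII_or_special_3_def by (simp add: add.left_commute)

definition partner :: "nat \<Rightarrow> nat" where
  "partner a = (if a = 1 then 2 else if a = 2 then 1 else if a = 3 then 4 else 3)"

lemma sum_eta_inv:
  "a \<in> idx \<Longrightarrow> (\<Sum>p\<in>idx. eta_inv a p * g p) = eta_inv a (partner a) * g (partner a)"
  by (auto simp: idx_eq eta_inv_def partner_def)

lemma eps_up_nested:
  "eps_up e a b c d = (\<Sum>p\<in>idx. eta_inv a p * (\<Sum>q\<in>idx. eta_inv b q *
     (\<Sum>r\<in>idx. eta_inv c r * (\<Sum>s\<in>idx. eta_inv d s * eps_dn e p q r s))))"
  by (simp add: eps_up_def sum_distrib_left mult.assoc)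

lemma eps_up_eq:
  assumes "a \<in> idx" "b \<in> idx" "c \<in> idx" "d \<in> idx"
  shows "eps_up e a b c d = eta_inv a (partner a) * (eta_inv b (partner b) *
    (eta_inv c (partner c) * (eta_inv d (partner d) *
     eps_dn e (partner a) (partner b) (partner c) (partner d))))"
  unfolding eps_up_nested using assms by (simp only: sum_eta_inv)

definition antisym_23 :: "(nat \<Rightarrow> nat \<Rightarrow> nat \<Rightarrow> complex) \<Rightarrow> bool" where
  "antisym_23 T \<longleftrightarrow> (\<forall>a\<in>idx. \<forall>b\<in>idx. \<forall>c\<in>idx. T a b c = - T a c b)"

lemma torsion_like_imp_antisym_23: "torsion_like T \<Longrightarrow> antisym_23 T"
  unfolding torsion_like_def antisym_23_def by blast

text \<open>Oriented by \<open>b < c\<close> so that it terminates as a rewrite rule.\<close>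

lemma antisym_23_swap:
  "antisym_23 T \<Longrightarrow> a \<in> idx \<Longrightarrow> b \<in> idx \<Longrightarrow> c \<in> idx \<Longrightarrow> b < c \<Longrightarrow> T a c b = - T a b c"
  unfolding antisym_23_def by (metis minus_minus)

lemma antisym_23_diag:
  assumes "antisym_23 T" "a \<in> idx" "b \<in> idx"
  shows "T a b b = 0"
proof -
  have "T a b b = - T a b b"
    using assms unfolding antisym_23_def by blast
  then show ?thesis
    by simp
qed

lemma vecpart_1:
  assumes "antisym_23 T"
  shows "vecpart T 1 = T 1 1 2 - T 3 1 4 - T 4 1 3"
  using antisym_23_swap[OF assms] antisym_23_diag[OF assms]
  by (simp add: vecpart_def sum_idx eta_inv_def idx_eq)

lemma axial_1:
  assumes "antisym_23 T"
  shows "3 * axial e T 1 = e * (T 1 3 4 - T 3 1 4 + T 4 1 3)"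
proof -
  have "6 * axial_up e T 2 = e * (T 1 4 3 - T 1 3 4 + T 3 1 4 - T 3 4 1 + T 4 3 1 - T 4 1 3)"
    unfolding axial_up_def sum_idx
    by (simp add: eps_up_eq idx_eq eta_inv_def partner_def eps_dn_def levi_def algebra_simps)
  moreover have "axial e T 1 = - axial_up e T 2"
    by (simp add: axial_def sum_idx eta_def)
  ultimately have "2 * (3 * axial e T 1) = 2 * (e * (T 1 3 4 - T 3 1 4 + T 4 1 3))"
    using antisym_23_swap[OF assms] by (simp add: idx_eq algebra_simps)
  then show ?thesis
    by simp
qed

lemma eta_vecpart_pos_bw:
  assumes "vecpart T 1 = 0" "0 < bw a + bw b + bw c"
  shows "eta a b * vecpart T c = 0"
proof (cases "eta a b = 0")
  case False
  then have "bw c > 0"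
    using assms(2) eta_nonzero_imp_bw_cancel by force
  then show ?thesis
    using assms(1) by (simp add: bw_pos_iff)
qed simp

lemma tenspart_pos_bw:
  assumes "vecpart T 1 = 0" "0 < bw a + bw b + bw c"
  shows "tenspart T a b c = (T a b c + T b a c) / 2"
proof -
  have vanish: "eta c a * vecpart T b = 0" "eta c b * vecpart T a = 0" "eta a b * vecpart T c = 0"
    by (rule eta_vecpart_pos_bw[OF assms(1)]; use assms(2) in linarith)+
  show ?thesis
    unfolding tenspart_def mult.assoc vanish by simp
qed

lemma typeII_or_special_3_tenspart_iff:
  assumes "vecpart T 1 = 0"
  shows "typeII_or_special_3 (tenspart T) \<longleftrightarrow> typeII_or_special_3 (\<lambda>a b c. T a b c + T b a c)"
  unfolding typeII_or_special_3_def by (simp add: tenspart_pos_bw[OF assms])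

lemma typeII_or_special_3_antisym_23_iff:
  assumes "antisym_23 T"
  shows "typeII_or_special_3 T \<longleftrightarrow>
    T 1 1 2 = 0 \<and> T 1 1 3 = 0 \<and> T 1 1 4 = 0 \<and> T 1 3 4 = 0 \<and>
    T 3 1 3 = 0 \<and> T 3 1 4 = 0 \<and> T 4 1 3 = 0 \<and> T 4 1 4 = 0"
  unfolding typeII_or_special_3_def ball_idx
  by (simp add: bw_def) (simp add: idx_eq antisym_23_swap[OF assms] antisym_23_diag[OF assms], blast)

lemma typeII_or_special_3_sym_12_components:
  assumes "antisym_23 T" "typeII_or_special_3 (\<lambda>a b c. T a b c + T b a c)"
  shows "T 1 1 2 = 0 \<and> T 1 1 3 = 0 \<and> T 1 1 4 = 0 \<and> T 3 1 3 = 0 \<and> T 4 1 4 = 0 \<and>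
    T 3 1 4 = - T 1 3 4 \<and> T 4 1 3 = T 1 3 4"
proof -
  have sym: "T a b c + T b a c = 0"
    if "a \<in> idx" "b \<in> idx" "c \<in> idx" "0 < bw a + bw b + bw c" for a b c
    using assms(2) that unfolding typeII_or_special_3_def by blast
  show ?thesis
    using sym[of 1 1 2] sym[of 1 1 3] sym[of 1 1 4] sym[of 1 3 3] sym[of 1 4 4]
      sym[of 1 3 4] sym[of 1 4 3]
    by (simp add: idx_eq bw_def antisym_23_swap[OF assms(1)] antisym_23_diag[OF assms(1)]
        add_eq_0_iff)
qed

theorem lemma1:
  fixes T :: "nat \<Rightarrow> nat \<Rightarrow> nat \<Rightarrow> complex" and e :: complex
  assumes "e = \<i> \<or> e = - \<i>"
    and "torsion_like T"
  shows "typeII_or_special_3 T \<longleftrightarrow>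
           (typeII_or_special_3 (tenspart T) \<and>
            typeII_or_special_1 (vecpart T) \<and>
            typeII_or_special_1 (axial e T))"
proof -
  have T: "antisym_23 T"
    using assms(2) by (rule torsion_like_imp_antisym_23)
  have "e \<noteq> 0"
    using assms(1) by auto
  show ?thesis
  proof
    assume II: "typeII_or_special_3 T"
    then have V: "vecpart T 1 = 0" and "axial e T 1 = 0"
      using typeII_or_special_3_antisym_23_iff[OF T] vecpart_1[OF T] axial_1[OF T, of e] by simp_all
    moreover have "typeII_or_special_3 (tenspart T)"
      using typeII_or_special_3_tenspart_iff[OF V] typeII_or_special_3_sym_12[OF II] by simp
    ultimately show "typeII_or_special_3 (tenspart T) \<and> typeII_or_special_1 (vecpart T) \<and>
        typeII_or_special_1 (axial e T)"
      by (simp add: typeII_or_special_1_iff)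
  next
    assume "typeII_or_special_3 (tenspart T) \<and> typeII_or_special_1 (vecpart T) \<and>
        typeII_or_special_1 (axial e T)"
    then have V: "vecpart T 1 = 0" and A: "axial e T 1 = 0"
      and "typeII_or_special_3 (tenspart T)"
      by (simp_all add: typeII_or_special_1_iff)
    then have "typeII_or_special_3 (\<lambda>a b c. T a b c + T b a c)"
      using typeII_or_special_3_tenspart_iff[OF V] by simp
    then have comps: "T 1 1 2 = 0 \<and> T 1 1 3 = 0 \<and> T 1 1 4 = 0 \<and> T 3 1 3 = 0 \<and>
        T 4 1 4 = 0 \<and> T 3 1 4 = - T 1 3 4 \<and> T 4 1 3 = T 1 3 4"
      using typeII_or_special_3_sym_12_components[OF T] by blast
    then have "e * (3 * T 1 3 4) = 0"
      using axial_1[OF T, of e] A by simp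
    then show "typeII_or_special_3 T"
      using comps \<open>e \<noteq> 0\<close> by (simp add: typeII_or_special_3_antisym_23_iff[OF T])
  qed
qed

end
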